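(* Let $\lambda=(\lambda_1,\ldots,\lambda_\ell)$ be a partition with $\ell$ positive parts. If $2\leq\ell<n$ and $\lambda_2\geq 2$, then the poset $\mathcal B_\lambda^n$ is not a lattice.
   Context: For $N\geq 1$ and a partition $\nu$ with at most $N$ positive parts, $\mathcal B_\nu^N$ is the set of semistandard Young tableaux of shape $\nu$ (rows weakly increasing, columns strictly increasing) with entries in $\{1,\ldots,N+1\}$, partially ordered by the reflexive transitive closure of $T<F_i(T)$ for $i\in\{1,\ldots,N\}$ with $F_i(T)\neq 0$. Here $F_i$ is the type A crystal lowering operator: in the reading word of $T$ (rows read from bottom to top, each row left to right) keep only letters $i$ and $i+1$, replace each $i$ by ")" and each $i+1$ by "(", and match parentheses in the usual way; if there is no unmatched ")", $F_i(T)=0$; otherwise $F_i(T)$ is obtained by changing the entry $i$ corresponding to the rightmost unmatched ")" into $i+1$. *)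

theory Defs
  imports "HOL-Algebra.Lattice"
begin

definition is_partition :: "nat list \<Rightarrow> bool" where
  "is_partition lam \<longleftrightarrow> sorted_wrt (\<ge>) lam \<and> (\<forall>x\<in>set lam. 0 < x)"

(* Tableaux are lists of rows (row 0 = top row, English convention). *)
definition ssyt :: "nat \<Rightarrow> nat list \<Rightarrow> nat list list \<Rightarrow> bool" where
  "ssyt N \<nu> T \<longleftrightarrow>
     map length T = \<nu> \<and>
     (\<forall>r < length T. sorted (T ! r)) \<and>
     (\<forall>r c. Suc r < length T \<and> c < length (T ! Suc r) \<longrightarrow> T ! r ! c < T ! Suc r ! c) \<and>
     (\<forall>row \<in> set T. \<forall>x \<in> set row. 1 \<le> x \<and> x \<le> N + 1)"

definition tabB :: "nat list \<Rightarrow> nat \<Rightarrow> nat list list set" where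
  "tabB \<nu> N = {T. ssyt N \<nu> T}"

definition reading_word :: "nat list list \<Rightarrow> nat list" where
  "reading_word T = concat (rev T)"

(* Positions of unmatched ")" (letters i) in the word, where i is ")" and i+1 is "(";
   k counts currently open (unmatched so far) "(" and p is the current position. *)
fun unmatched :: "nat \<Rightarrow> nat \<Rightarrow> nat \<Rightarrow> nat list \<Rightarrow> nat list" where
  "unmatched i k p [] = []"
| "unmatched i k p (x # xs) =
     (if x = i + 1 then unmatched i (Suc k) (Suc p) xs
      else if x = i then
        (if 0 < k then unmatched i (k - 1) (Suc p) xs else p # unmatched i 0 (Suc p) xs)
      else unmatched i k (Suc p) xs)"

fun split_lens :: "nat list \<Rightarrow> 'a list \<Rightarrow> 'a list list" where
  "split_lens [] xs = []"
| "split_lens (l # ls) xs = take l xs # split_lens ls (drop l xs)"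

(* Crystal lowering operator F_i; None encodes F_i(T) = 0. *)
definition crystal_F :: "nat \<Rightarrow> nat list list \<Rightarrow> nat list list option" where
  "crystal_F i T =
     (let w = reading_word T; u = unmatched i 0 0 w in
      if u = [] then None
      else Some (rev (split_lens (map length (rev T)) (w[last u := i + 1]))))"

definition crystal_step :: "nat list \<Rightarrow> nat \<Rightarrow> (nat list list \<times> nat list list) set" where
  "crystal_step \<nu> N = {(T, T'). T \<in> tabB \<nu> N \<and> (\<exists>i \<in> {1..N}. crystal_F i T = Some T')}"

definition crystal_le :: "nat list \<Rightarrow> nat \<Rightarrow> nat list list \<Rightarrow> nat list list \<Rightarrow> bool" where
  "crystal_le \<nu> N T T' \<longleftrightarrow> (T, T') \<in> (crystal_step \<nu> N)\<^sup>*"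

definition crystal_poset :: "nat list \<Rightarrow> nat \<Rightarrow> nat list list gorder" where
  "crystal_poset \<nu> N = \<lparr>carrier = tabB \<nu> N, eq = (=), le = crystal_le \<nu> N\<rparr>"

end

theory Submission
  imports Defs
begin

(* The entry sum grades the crystal order, since F_i raises one letter i of the reading word
   to i + 1.  Fill rows 2, ..., l - 1 with large letters that no F_1, F_2, F_3 can touch, and let
   T(x, y, z) have first row 1...1x and second row 2...2yz.  Then T(1,2,4) and T(2,2,3) are both
   covered by a = T(2,2,4) (via F_1 and F_3), and both lie below b = T(2,3,4) (via F_2 then F_1,
   resp. F_2 then F_3).  The meet of a and b would lie above both covered elements and below a,
   hence be a; so a <= b, and as b sits one rank above a, b = F_i(a).  The reading words of a and b
   differ in the letter y, forcing i = 2, but F_2 raises x in a instead. *)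

definition entry_sum :: "nat list list \<Rightarrow> nat" where
  "entry_sum T = sum_list (concat T)"

lemma split_lens_concat: "split_lens (map length Ts) (concat Ts) = Ts"
  by (induction Ts) auto

lemma concat_split_lens: "sum_list ls = length xs \<Longrightarrow> concat (split_lens ls xs) = xs"
  by (induction ls arbitrary: xs) auto

lemma map_length_split_lens: "sum_list ls = length xs \<Longrightarrow> map length (split_lens ls xs) = ls"
  by (induction ls arbitrary: xs) auto

lemma reading_word_append: "reading_word (T @ R) = reading_word R @ reading_word T"
  by (simp add: reading_word_def)

lemma length_reading_word: "length (reading_word T) = sum_list (map length T)"
  by (simp add: reading_word_def length_concat rev_map [symmetric])

lemma sum_list_reading_word: "sum_list (reading_word T) = entry_sum T"
  by (induction T) (simp_all add: reading_word_def entry_sum_def)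

lemma unmatched_shift: "unmatched i k (p + d) w = map (\<lambda>j. j + d) (unmatched i k p w)"
  by (induction w arbitrary: k p) (auto simp flip: add_Suc)

lemma unmatched_append_inert:
  "\<forall>x\<in>set v. x \<noteq> i \<and> x \<noteq> Suc i \<Longrightarrow> unmatched i k p (v @ w) = unmatched i k (p + length v) w"
  by (induction v arbitrary: k p) auto

lemma unmatched_replicate_append:
  "unmatched i k p (replicate m x @ w) =
    (if x = Suc i then unmatched i (k + m) (p + m) w
     else if x = i then [p + k..<p + m] @ unmatched i (k - m) (p + m) w
     else unmatched i k (p + m) w)"
proof (induction m arbitrary: k p)
  case (Suc m)
  then show ?case by (cases k) (auto simp: upt_conv_Cons)
qed simp

lemma unmatched_letter:
  "j \<in> set (unmatched i k p w) \<Longrightarrow> p \<le> j \<and> j < p + length w \<and> w ! (j - p) = i"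
proof (induction w arbitrary: k p)
  case (Cons x w)
  then show ?case
    by (fastforce split: if_splits simp: nth_Cons' Suc_diff_Suc dest: Cons.IH)
qed simp

lemma crystal_F_eq_None_iff: "crystal_F i T = None \<longleftrightarrow> unmatched i 0 0 (reading_word T) = []"
  by (simp add: crystal_F_def Let_def)

lemma crystal_F_eq_Some_iff:
  "crystal_F i T = Some T' \<longleftrightarrow>
     unmatched i 0 0 (reading_word T) \<noteq> [] \<and>
     reading_word T' = (reading_word T)[last (unmatched i 0 0 (reading_word T)) := Suc i] \<and>
     map length T' = map length T"
proof -
  define w where "w = (reading_word T)[last (unmatched i 0 0 (reading_word T)) := Suc i]"
  have len: "sum_list (map length (rev T)) = length w"
    by (simp add: w_def length_reading_word rev_map [symmetric])
  have "T' = rev (split_lens (map length (rev T)) w) \<longleftrightarrow>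
        reading_word T' = w \<and> map length T' = map length T" (is "?lhs \<longleftrightarrow> ?rhs")
  proof
    assume ?lhs
    moreover have "map length (split_lens (map length (rev T)) w) = map length (rev T)"
      using len by (rule map_length_split_lens)
    ultimately show ?rhs
      using len by (simp add: reading_word_def concat_split_lens flip: rev_map)
  next
    assume ?rhs
    then have "map length (rev T') = map length (rev T)"
      by (simp flip: rev_map)
    then show ?lhs
      using \<open>?rhs\<close> split_lens_concat[of "rev T'"] by (simp add: reading_word_def)
  qed
  then show ?thesis by (auto simp: crystal_F_def Let_def w_def)
qed

lemma reading_word_crystal_F:
  assumes "crystal_F i T = Some T'"
  shows "\<exists>j < length (reading_word T). reading_word T ! j = i \<and>
           reading_word T' = (reading_word T)[j := Suc i]"
  using assms unmatched_letter[of "last (unmatched i 0 0 (reading_word T))" i 0 0 "reading_word T"]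
  by (auto simp: crystal_F_eq_Some_iff)

lemma crystal_F_append_inert_rows:
  assumes "\<forall>x\<in>set (concat R). x \<noteq> i \<and> x \<noteq> Suc i"
  shows "crystal_F i (T @ R) = map_option (\<lambda>T'. T' @ R) (crystal_F i T)"
proof -
  define v where "v = reading_word R"
  define u where "u = unmatched i 0 0 (reading_word T)"
  have "\<forall>x\<in>set v. x \<noteq> i \<and> x \<noteq> Suc i"
    using assms by (simp add: v_def reading_word_def)
  then have u: "unmatched i 0 0 (reading_word (T @ R)) = map (\<lambda>j. j + length v) u"
    using unmatched_shift[of i 0 0 "length v"]
    by (simp add: reading_word_append unmatched_append_inert v_def u_def)
  show ?thesis
  proof (cases "crystal_F i T")
    case None
    then have "crystal_F i (T @ R) = None"
      using u by (simp add: crystal_F_eq_None_iff u_def)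
    with None show ?thesis by simp
  next
    case (Some T')
    then have "u \<noteq> []" "reading_word T' = (reading_word T)[last u := Suc i]"
      "map length T' = map length T"
      by (simp_all add: crystal_F_eq_Some_iff u_def)
    then have "crystal_F i (T @ R) = Some (T' @ R)"
      using u by (simp add: crystal_F_eq_Some_iff reading_word_append last_map list_update_append
          flip: v_def)
    with Some show ?thesis by simp
  qed
qed

lemma entry_sum_crystal_F: "crystal_F i T = Some T' \<Longrightarrow> entry_sum T' = Suc (entry_sum T)"
proof -
  have "sum_list (w[j := Suc (w ! j)]) = Suc (sum_list w)" if "j < length w" for w :: "nat list" and j
    using that by (induction w arbitrary: j) (auto simp: nth_Cons' split: nat.splits)
  then show "entry_sum T' = Suc (entry_sum T)" if "crystal_F i T = Some T'"
    using reading_word_crystal_F[OF that] by (metis sum_list_reading_word)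
qed

lemma crystal_F_changed_letter:
  assumes "crystal_F i T = Some T'" and "reading_word T' ! j \<noteq> reading_word T ! j"
  shows "reading_word T ! j = i"
  using reading_word_crystal_F[OF assms(1)] assms(2) by (metis nth_list_update_neq)

lemma crystal_step_entry_sum:
  "(T, T') \<in> crystal_step \<nu> N \<Longrightarrow> entry_sum T' = Suc (entry_sum T)"
  by (auto simp: crystal_step_def entry_sum_crystal_F)

lemma crystal_le_entry_sum:
  "crystal_le \<nu> N T T' \<Longrightarrow> T = T' \<or> entry_sum T < entry_sum T'"
  unfolding crystal_le_def
  by (induction rule: rtrancl_induct) (auto dest: crystal_step_entry_sum)

lemma crystal_le_trans:
  "crystal_le \<nu> N T X \<Longrightarrow> crystal_le \<nu> N X T' \<Longrightarrow> crystal_le \<nu> N T T'"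
  unfolding crystal_le_def by (rule rtrancl_trans)

lemma crystal_le_crystal_F:
  "T \<in> tabB \<nu> N \<Longrightarrow> i \<in> {1..N} \<Longrightarrow> crystal_F i T = Some T' \<Longrightarrow> crystal_le \<nu> N T T'"
  by (auto simp: crystal_le_def crystal_step_def intro!: r_into_rtrancl)

lemma crystal_le_covered:
  assumes "crystal_le \<nu> N T X" "crystal_le \<nu> N X T'" "entry_sum T' = Suc (entry_sum T)"
  shows "X = T \<or> X = T'"
  using crystal_le_entry_sum[OF assms(1)] crystal_le_entry_sum[OF assms(2)] assms(3) by auto

lemma crystal_le_cover_step:
  assumes "crystal_le \<nu> N T T'" "entry_sum T' = Suc (entry_sum T)"
  shows "\<exists>i\<in>{1..N}. crystal_F i T = Some T'"
  using assms(1)[unfolded crystal_le_def]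
proof (cases rule: rtranclE)
  case (step X)
  have "entry_sum T' = Suc (entry_sum X)"
    using step(2) by (rule crystal_step_entry_sum)
  then have "X = T"
    using crystal_le_entry_sum[of \<nu> N T X] step(1) assms(2) by (auto simp: crystal_le_def)
  with step show ?thesis by (auto simp: crystal_step_def)
qed (use assms(2) in simp)

lemma (in lower_semilattice) le_of_distinct_covered_lower_bounds:
  assumes carrier: "a \<in> carrier L" "b \<in> carrier L" "c \<in> carrier L" "d \<in> carrier L"
    and "c \<noteq> d" "c \<sqsubseteq> a" "d \<sqsubseteq> a" "c \<sqsubseteq> b" "d \<sqsubseteq> b"
    and cover_c: "\<And>x. x \<in> carrier L \<Longrightarrow> c \<sqsubseteq> x \<Longrightarrow> x \<sqsubseteq> a \<Longrightarrow> x = c \<or> x = a"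
    and cover_d: "\<And>x. x \<in> carrier L \<Longrightarrow> d \<sqsubseteq> x \<Longrightarrow> x \<sqsubseteq> a \<Longrightarrow> x = d \<or> x = a"
  shows "a \<sqsubseteq> b"
proof -
  let ?g = "a \<sqinter> b"
  have g: "?g \<in> carrier L" "?g \<sqsubseteq> a" "?g \<sqsubseteq> b"
    using carrier by (simp_all add: meet_left meet_right)
  have "c \<sqsubseteq> ?g" "d \<sqsubseteq> ?g"
    using assms by (simp_all add: meet_le)
  then have "?g = a"
    using cover_c[OF g(1)] cover_d[OF g(1)] g(2) \<open>c \<noteq> d\<close> by metis
  with g(3) show ?thesis by simp
qed

lemma crystal_poset_not_lattice_of_witnesses:
  assumes "a \<in> tabB \<nu> N" "b \<in> tabB \<nu> N" "c \<in> tabB \<nu> N" "d \<in> tabB \<nu> N"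
    and "c \<noteq> d"
    and "crystal_le \<nu> N c a" "crystal_le \<nu> N d a" "crystal_le \<nu> N c b" "crystal_le \<nu> N d b"
    and sums: "entry_sum a = Suc (entry_sum c)" "entry_sum a = Suc (entry_sum d)"
      "entry_sum b = Suc (entry_sum a)"
    and no_step: "\<And>i. crystal_F i a \<noteq> Some b"
  shows "\<not> lattice (crystal_poset \<nu> N)"
proof
  assume "lattice (crystal_poset \<nu> N)"
  then interpret lower_semilattice "crystal_poset \<nu> N"
    by (simp add: lattice_def)
  have "crystal_le \<nu> N a b"
    using le_of_distinct_covered_lower_bounds[of a b c d] assms crystal_le_covered
    by (simp add: crystal_poset_def)
  then show False
    using crystal_le_cover_step sums(3) no_step by blast
qed

lemma ssyt_append:
  assumes "ssyt N \<mu> T" "ssyt N \<nu> R" "T \<noteq> []"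
    and columns: "\<And>c. R \<noteq> [] \<Longrightarrow> c < length (hd R) \<Longrightarrow> last T ! c < hd R ! c"
  shows "ssyt N (\<mu> @ \<nu>) (T @ R)"
  unfolding ssyt_def
proof (intro conjI allI impI)
  show "map length (T @ R) = \<mu> @ \<nu>" and "\<forall>row\<in>set (T @ R). \<forall>x\<in>set row. 1 \<le> x \<and> x \<le> N + 1"
    using assms(1,2) by (auto simp: ssyt_def)
  show "sorted ((T @ R) ! r)" if "r < length (T @ R)" for r
    using assms(1,2) that by (auto simp: ssyt_def nth_append)
  fix r c
  assume rc: "Suc r < length (T @ R) \<and> c < length ((T @ R) ! Suc r)"
  consider "Suc r < length T" | "Suc r = length T" | "length T \<le> r" by linarith
  then show "(T @ R) ! r ! c < (T @ R) ! Suc r ! c"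
  proof cases
    case 1
    then show ?thesis using assms(1) rc by (simp add: ssyt_def nth_append)
  next
    case 2
    then have "R \<noteq> []" "(T @ R) ! r = last T" "(T @ R) ! Suc r = hd R"
      using rc assms(3) by (auto simp: nth_append last_conv_nth hd_conv_nth simp flip: 2)
    then show ?thesis using columns rc by simp
  next
    case 3
    then have "Suc (r - length T) < length R" "c < length (R ! Suc (r - length T))"
      using rc by (auto simp: nth_append Suc_diff_le)
    then have "R ! (r - length T) ! c < R ! Suc (r - length T) ! c"
      using assms(2) by (simp add: ssyt_def)
    with 3 show ?thesis by (simp add: nth_append Suc_diff_le)
  qed
qed

lemma ssyt_single_row:
  "sorted row \<Longrightarrow> \<forall>v\<in>set row. 1 \<le> v \<and> v \<le> N + 1 \<Longrightarrow> ssyt N [length row] [row]"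
  by (simp add: ssyt_def)

lemma partition_nth_mono:
  "is_partition lam \<Longrightarrow> r \<le> s \<Longrightarrow> s < length lam \<Longrightarrow> lam ! s \<le> lam ! r"
  unfolding is_partition_def by (metis order.order_iff_strict sorted_wrt_nth_less)

definition head_rows :: "nat \<Rightarrow> nat \<Rightarrow> nat \<Rightarrow> nat \<Rightarrow> nat \<Rightarrow> nat list list" where
  "head_rows m k x y z = [replicate m 1 @ [x], replicate k 2 @ [y, z]]"

lemma ssyt_head_rows:
  assumes "k < m" "1 \<le> x" "x < z" "2 \<le> y" "y \<le> z" "z \<le> N + 1"
  shows "ssyt N [Suc m, k + 2] (head_rows m k x y z)"
proof -
  have "ssyt N ([length (replicate m 1 @ [x])] @ [length (replicate k 2 @ [y, z])])
    ([replicate m 1 @ [x]] @ [replicate k 2 @ [y, z]])"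
  proof (rule ssyt_append)
    show "ssyt N [length (replicate m 1 @ [x])] [replicate m 1 @ [x]]"
      "ssyt N [length (replicate k 2 @ [y, z])] [replicate k 2 @ [y, z]]"
      using assms by (intro ssyt_single_row; auto simp: sorted_append)+
    fix c
    assume "c < length (hd [replicate k 2 @ [y, z]])"
    then have "c < k \<or> c = k \<or> c = Suc k" by auto
    then show "last [replicate m 1 @ [x]] ! c < hd [replicate k 2 @ [y, z]] ! c"
      using assms by (auto simp: nth_append)
  qed simp
  then show ?thesis by (simp add: head_rows_def)
qed

lemma reading_word_head_rows:
  "reading_word (head_rows m k x y z) = replicate k 2 @ [y, z] @ replicate m 1 @ [x]"
  by (simp add: reading_word_def head_rows_def)

lemma map_length_head_rows: "map length (head_rows m k x y z) = [Suc m, k + 2]"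
  by (simp add: head_rows_def)

lemma entry_sum_head_rows:
  "entry_sum (head_rows m k x y z @ R) = x + y + z + (m + 2 * k + entry_sum R)"
  by (simp add: entry_sum_def head_rows_def sum_list_replicate)

lemma crystal_F1_head_rows:
  assumes "k < m" "2 \<le> y" "3 \<le> z"
  shows "crystal_F 1 (head_rows m k 1 y z) = Some (head_rows m k 2 y z)"
  using assms
  by (simp add: crystal_F_eq_Some_iff reading_word_head_rows map_length_head_rows
      unmatched_replicate_append list_update_append)

lemma crystal_F3_head_rows:
  assumes "x \<le> 2" "y \<le> 3"
  shows "crystal_F 3 (head_rows m k x y 3) = Some (head_rows m k x y 4)"
  using assms
  by (simp add: crystal_F_eq_Some_iff reading_word_head_rows map_length_head_rows
      unmatched_replicate_append list_update_append)

lemma crystal_F2_head_rows_second: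
  assumes "(x, z) \<in> {(1, 4), (2, 3)}"
  shows "crystal_F 2 (head_rows m k x 2 z) = Some (head_rows m k x 3 z)"
  using assms
  by (auto simp: crystal_F_eq_Some_iff reading_word_head_rows map_length_head_rows
      unmatched_replicate_append list_update_append)

lemma crystal_F2_head_rows_top:
  "crystal_F 2 (head_rows m k 2 2 4) = Some (head_rows m k 3 2 4)"
  by (simp add: crystal_F_eq_Some_iff reading_word_head_rows map_length_head_rows
      unmatched_replicate_append list_update_append)

lemma crystal_F_head_rows_not_raise_second:
  assumes "\<forall>v\<in>set (concat R). v \<noteq> 2 \<and> v \<noteq> 3"
  shows "crystal_F i (head_rows m k 2 2 4 @ R) \<noteq> Some (head_rows m k 2 3 4 @ R)"
proof
  assume F: "crystal_F i (head_rows m k 2 2 4 @ R) = Some (head_rows m k 2 3 4 @ R)"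
  have "reading_word (head_rows m k x y z @ R) ! (length (reading_word R) + k) = y" for x y z
    by (simp add: reading_word_append reading_word_head_rows nth_append)
  then have "i = 2"
    using crystal_F_changed_letter[OF F, of "length (reading_word R) + k"] by simp
  then have "crystal_F i (head_rows m k 2 2 4 @ R) = Some (head_rows m k 3 2 4 @ R)"
    using assms by (simp add: crystal_F_append_inert_rows crystal_F2_head_rows_top)
  with F show False by (simp add: head_rows_def)
qed

(* Row r (2 <= r < length lam) is filled with the largest letter it can hold,
   n + 1 - (length lam - 1 - r); as length lam < n these letters are at least 5, so the rows
   are inert for F_1, F_2 and F_3. *)

definition lower_rows :: "nat list \<Rightarrow> nat \<Rightarrow> nat list list" where
  "lower_rows lam n = map (\<lambda>r. replicate (lam ! r) (n + 2 + r - length lam)) [2..<length lam]"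

lemma lower_rows_nth:
  "j < length lam - 2 \<Longrightarrow> lower_rows lam n ! j = replicate (lam ! (j + 2)) (n + 4 + j - length lam)"
  unfolding lower_rows_def by (subst nth_map_upt) (auto simp: add.commute add.left_commute)

lemma lower_rows_letters:
  "x \<in> set (concat (lower_rows lam n)) \<Longrightarrow> length lam < n \<Longrightarrow> 5 \<le> x \<and> x \<le> n + 1"
  by (auto simp: lower_rows_def)

lemma ssyt_lower_rows:
  assumes "is_partition lam" "length lam < n"
  shows "ssyt n (drop 2 lam) (lower_rows lam n)"
  unfolding ssyt_def
proof (intro conjI allI impI)
  show "map length (lower_rows lam n) = drop 2 lam"
    by (rule nth_equalityI) (auto simp: lower_rows_def)
  show "sorted (lower_rows lam n ! r)" if "r < length (lower_rows lam n)" for r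
    using that by (simp add: lower_rows_def)
  show "\<forall>row\<in>set (lower_rows lam n). \<forall>x\<in>set row. 1 \<le> x \<and> x \<le> n + 1"
    using lower_rows_letters[OF _ assms(2)] by fastforce
  fix r c
  assume "Suc r < length (lower_rows lam n) \<and> c < length (lower_rows lam n ! Suc r)"
  then have r: "Suc r < length lam - 2"
    by (simp add: lower_rows_def)
  moreover have "c < lam ! (r + 3)"
    using \<open>Suc r < _ \<and> c < _\<close> r by (simp add: lower_rows_nth numeral_3_eq_3)
  moreover have "lam ! (r + 3) \<le> lam ! (r + 2)"
    using partition_nth_mono[OF assms(1), of "r + 2" "r + 3"] r by simp
  ultimately show "lower_rows lam n ! r ! c < lower_rows lam n ! Suc r ! c"
    using assms(2) by (simp add: lower_rows_nth numeral_3_eq_3)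
qed

lemma head_rows_lower_rows_in_tabB:
  assumes lam: "is_partition lam" "2 \<le> length lam" "length lam < n"
    and heads: "lam ! 0 = Suc m" "lam ! 1 = k + 2"
    and letters: "1 \<le> x" "x < z" "2 \<le> y" "y \<le> z" "z \<le> 4"
  shows "head_rows m k x y z @ lower_rows lam n \<in> tabB lam n"
proof -
  have "lam = lam ! 0 # lam ! 1 # drop 2 lam"
    using lam(2) by (cases lam; cases "tl lam") auto
  then have lam_split: "lam = [Suc m, k + 2] @ drop 2 lam"
    using heads by simp
  have "k < m"
    using partition_nth_mono[OF lam(1), of 0 1] lam(2) heads by simp
  have lower: "ssyt n (drop 2 lam) (lower_rows lam n)"
    using lam(1,3) by (rule ssyt_lower_rows)
  have "ssyt n ([Suc m, k + 2] @ drop 2 lam) (head_rows m k x y z @ lower_rows lam n)"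
  proof (rule ssyt_append[OF ssyt_head_rows lower])
    fix c
    assume R: "lower_rows lam n \<noteq> []" "c < length (hd (lower_rows lam n))"
    then have "0 < length lam - 2"
      by (simp add: lower_rows_def)
    then have hd: "hd (lower_rows lam n) = replicate (lam ! 2) (n + 4 - length lam)"
      using R(1) lower_rows_nth[of 0 lam n] by (simp add: hd_conv_nth numeral_2_eq_2)
    then have "c < k + 2"
      using R(2) partition_nth_mono[OF lam(1), of 1 2] heads \<open>0 < length lam - 2\<close> by simp
    then have "last (head_rows m k x y z) ! c \<le> 4"
      using letters by (auto simp: head_rows_def nth_append nth_Cons' less_Suc_eq)
    then show "last (head_rows m k x y z) ! c < hd (lower_rows lam n) ! c"
      using hd R(2) lam(3) by simp
  qed (use \<open>k < m\<close> letters lam in \<open>auto simp: head_rows_def\<close>)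
  then show ?thesis
    unfolding tabB_def by (simp only: flip: lam_split) simp
qed

lemma crystal_le_head_rows_lower_rows:
  assumes lam: "is_partition lam" "2 \<le> length lam" "length lam < n"
    and heads: "lam ! 0 = Suc m" "lam ! 1 = k + 2"
    and letters: "1 \<le> x" "x < z" "2 \<le> y" "y \<le> z" "z \<le> 4"
    and F: "i \<in> {1..3}" "crystal_F i (head_rows m k x y z) = Some H"
  shows "crystal_le lam n (head_rows m k x y z @ lower_rows lam n) (H @ lower_rows lam n)"
proof (rule crystal_le_crystal_F)
  show "head_rows m k x y z @ lower_rows lam n \<in> tabB lam n"
    by (rule head_rows_lower_rows_in_tabB[OF lam heads letters])
  show "i \<in> {1..n}"
    using F(1) lam(2,3) by auto
  have "\<forall>v\<in>set (concat (lower_rows lam n)). v \<noteq> i \<and> v \<noteq> Suc i"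
    using F(1) lower_rows_letters[OF _ lam(3)] by fastforce
  with F(2) show "crystal_F i (head_rows m k x y z @ lower_rows lam n) = Some (H @ lower_rows lam n)"
    by (simp add: crystal_F_append_inert_rows)
qed

theorem lemma5p8:
  fixes lam :: "nat list" and n :: nat
  assumes "is_partition lam"
    and "2 \<le> length lam" and "length lam < n"
    and "lam ! 1 \<ge> 2"
  shows "\<not> lattice (crystal_poset lam n)"
proof -
  have "lam ! 1 \<le> lam ! 0"
    using partition_nth_mono[OF assms(1), of 0 1] assms(2) by simp
  define m k where "m = lam ! 0 - 1" and "k = lam ! 1 - 2"
  with assms(4) \<open>lam ! 1 \<le> lam ! 0\<close>
  have heads: "lam ! 0 = Suc m" "lam ! 1 = k + 2" and "k < m"
    by simp_all
  define T where "T x y z = head_rows m k x y z @ lower_rows lam n" for x y z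
  note step = crystal_le_head_rows_lower_rows[OF assms(1-3) heads]
  have "crystal_le lam n (T 1 2 4) (T 2 2 4)"
    unfolding T_def by (rule step[OF _ _ _ _ _ _ crystal_F1_head_rows]) (use \<open>k < m\<close> in simp_all)
  moreover have "crystal_le lam n (T 2 2 3) (T 2 2 4)"
    unfolding T_def by (rule step[OF _ _ _ _ _ _ crystal_F3_head_rows]) simp_all
  moreover have "crystal_le lam n (T 1 2 4) (T 2 3 4)"
    unfolding T_def
    by (rule crystal_le_trans[OF step[OF _ _ _ _ _ _ crystal_F2_head_rows_second]
          step[OF _ _ _ _ _ _ crystal_F1_head_rows]]) (use \<open>k < m\<close> in simp_all)
  moreover have "crystal_le lam n (T 2 2 3) (T 2 3 4)"
    unfolding T_def
    by (rule crystal_le_trans[OF step[OF _ _ _ _ _ _ crystal_F2_head_rows_second]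
          step[OF _ _ _ _ _ _ crystal_F3_head_rows]]) simp_all
  moreover have "crystal_F i (T 2 2 4) \<noteq> Some (T 2 3 4)" for i
    using crystal_F_head_rows_not_raise_second lower_rows_letters[OF _ assms(3)]
    by (fastforce simp: T_def)
  moreover have "T 1 2 4 \<noteq> T 2 2 3"
    by (simp add: T_def head_rows_def)
  ultimately show ?thesis
    using head_rows_lower_rows_in_tabB[OF assms(1-3) heads]
    by (intro crystal_poset_not_lattice_of_witnesses[of "T 2 2 4" lam n "T 2 3 4" "T 1 2 4" "T 2 2 3"])
      (simp_all add: T_def entry_sum_head_rows)
qed

end
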